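(* Let $\mathbf{X}=(X_1,\dots,X_d)$ be a random vector such that each $X_i$ is a.s. nonnegative with $0<E(X_i)<\infty$, and let $\|\mathbf{x}\|_F=E(\max(|x_0|,|x_1|X_1,\dots,|x_d|X_d))$. For any $\mathbf{x}\in\mathbb{R}^{d+1}$, $$\max(|x_0|,|x_1|E(X_1),\dots,|x_d|E(X_d))\le\|\mathbf{x}\|_F\le|x_0|+\sum_{i=1}^d|x_i|E(X_i).$$ The upper bound is strict whenever $x_0\ne0$ and $x_i\ne0$ for at least one $i\in\{1,\dots,d\}$. *)

theory Defs
  imports "HOL-Probability.Probability"
begin

text \<open>The random vector X = (X_1,...,X_d) is given as a family X :: nat => 'a => real,
  indexed by i in {1..d}; a point x of R^(d+1) is a function nat => real on indices {0..d}.\<close>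

definition F_norm :: "'a measure \<Rightarrow> (nat \<Rightarrow> 'a \<Rightarrow> real) \<Rightarrow> nat \<Rightarrow> (nat \<Rightarrow> real) \<Rightarrow> real" where
  "F_norm M X d x =
     (\<integral>\<omega>. Max ({\<bar>x 0\<bar>} \<union> {\<bar>x i\<bar> * X i \<omega> | i. i \<in> {1..d}}) \<partial>M)"

end

theory Submission
  imports Defs
begin

text \<open>Both bounds are pointwise facts integrated: each component is at most the maximum, and
  the maximum of nonnegative numbers is at most their sum. For the strict bound, the maximum
  misses at least one of two components, so the sum exceeds it pointwise by at least
  \<open>min \<bar>x\<^sub>0\<bar> (\<bar>x\<^sub>j\<bar> X\<^sub>j)\<close>; since \<open>x\<^sub>0 \<noteq> 0\<close>, this minimum vanishes only where
  \<open>X\<^sub>j\<close> does, so its expectation is positive.\<close>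

lemma Max_le_sum_nonneg:
  fixes a :: "'i \<Rightarrow> 'b::{ordered_comm_monoid_add, linorder}"
  assumes "finite I" "I \<noteq> {}" "\<And>i. i \<in> I \<Longrightarrow> 0 \<le> a i"
  shows "Max (a ` I) \<le> sum a I"
proof (subst Max_le_iff)
  show "\<forall>b\<in>a ` I. b \<le> sum a I"
  proof
    fix b assume "b \<in> a ` I"
    then obtain i where "i \<in> I" "b = a i"
      by auto
    then have "sum a {i} \<le> sum a I"
      using assms by (intro sum_mono2) auto
    then show "b \<le> sum a I"
      using \<open>b = a i\<close> by simp
  qed
qed (use assms in auto)

lemma Max_add_min_le_sum_nonneg:
  fixes a :: "'i \<Rightarrow> 'b::{ordered_comm_monoid_add, linorder}"
  assumes "finite I" "j \<in> I" "k \<in> I" "j \<noteq> k" "\<And>i. i \<in> I \<Longrightarrow> 0 \<le> a i"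
  shows "Max (a ` I) + min (a j) (a k) \<le> sum a I"
proof -
  have "Max (a ` I) \<in> a ` I"
    using assms(1,2) by (intro Max_in) auto
  then obtain m where m: "m \<in> I" "Max (a ` I) = a m"
    by auto
  obtain l where l: "l \<in> {j, k}" "l \<noteq> m"
    using assms(4) by auto
  have "Max (a ` I) + min (a j) (a k) \<le> sum a {m, l}"
    using m l by (auto intro: add_left_mono)
  also have "\<dots> \<le> sum a I"
    using assms m l by (intro sum_mono2) auto
  finally show ?thesis .
qed

lemma integrable_Max:
  fixes f :: "'i \<Rightarrow> 'a \<Rightarrow> real"
  assumes "finite I" "I \<noteq> {}" "\<And>i. i \<in> I \<Longrightarrow> integrable M (f i)"
  shows "integrable M (\<lambda>\<omega>. Max ((\<lambda>i. f i \<omega>) ` I))"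
proof (rule Bochner_Integration.integrable_bound[where f = "\<lambda>\<omega>. \<Sum>i\<in>I. \<bar>f i \<omega>\<bar>"])
  show "integrable M (\<lambda>\<omega>. \<Sum>i\<in>I. \<bar>f i \<omega>\<bar>)"
    using assms(3) by auto
  show "(\<lambda>\<omega>. Max ((\<lambda>i. f i \<omega>) ` I)) \<in> borel_measurable M"
    using assms by (intro borel_measurable_Max) auto
  show "AE \<omega> in M. norm (Max ((\<lambda>i. f i \<omega>) ` I)) \<le> norm (\<Sum>i\<in>I. \<bar>f i \<omega>\<bar>)"
  proof (rule AE_I2)
    fix \<omega>
    have "Max ((\<lambda>i. f i \<omega>) ` I) \<in> (\<lambda>i. f i \<omega>) ` I"
      using assms(1,2) by (intro Max_in) auto
    then obtain m where m: "m \<in> I" "Max ((\<lambda>i. f i \<omega>) ` I) = f m \<omega>"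
      by auto
    have "\<bar>f m \<omega>\<bar> \<le> (\<Sum>i\<in>I. \<bar>f i \<omega>\<bar>)"
      using assms(1) m(1) by (intro member_le_sum) auto
    with m(2) show "norm (Max ((\<lambda>i. f i \<omega>) ` I)) \<le> norm (\<Sum>i\<in>I. \<bar>f i \<omega>\<bar>)"
      by (simp add: sum_nonneg)
  qed
qed

lemma integral_le_integral_Max:
  fixes f :: "'i \<Rightarrow> 'a \<Rightarrow> real"
  assumes "finite I" "j \<in> I" "\<And>i. i \<in> I \<Longrightarrow> integrable M (f i)"
  shows "(\<integral>\<omega>. f j \<omega> \<partial>M) \<le> (\<integral>\<omega>. Max ((\<lambda>i. f i \<omega>) ` I) \<partial>M)"
  using assms by (intro integral_mono integrable_Max) auto

lemma integral_Max_le_sum_integral: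
  fixes f :: "'i \<Rightarrow> 'a \<Rightarrow> real"
  assumes "finite I" "I \<noteq> {}" "\<And>i. i \<in> I \<Longrightarrow> integrable M (f i)"
    and "\<And>i. i \<in> I \<Longrightarrow> AE \<omega> in M. 0 \<le> f i \<omega>"
  shows "(\<integral>\<omega>. Max ((\<lambda>i. f i \<omega>) ` I) \<partial>M) \<le> (\<Sum>i\<in>I. \<integral>\<omega>. f i \<omega> \<partial>M)"
proof -
  have "AE \<omega> in M. \<forall>i\<in>I. 0 \<le> f i \<omega>"
    by (rule AE_finite_allI[OF assms(1)]) (rule assms(4))
  then have "AE \<omega> in M. Max ((\<lambda>i. f i \<omega>) ` I) \<le> (\<Sum>i\<in>I. f i \<omega>)"
    by eventually_elim (intro Max_le_sum_nonneg; use assms(1,2) in auto)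
  then have "(\<integral>\<omega>. Max ((\<lambda>i. f i \<omega>) ` I) \<partial>M) \<le> (\<integral>\<omega>. (\<Sum>i\<in>I. f i \<omega>) \<partial>M)"
    using assms(1-3) by (intro integral_mono_AE integrable_Max) auto
  also have "\<dots> = (\<Sum>i\<in>I. \<integral>\<omega>. f i \<omega> \<partial>M)"
    using assms(3) by (rule Bochner_Integration.integral_sum)
  finally show ?thesis .
qed

lemma integral_Max_less_sum_integral:
  fixes f :: "'i \<Rightarrow> 'a \<Rightarrow> real"
  assumes "finite I" "j \<in> I" "k \<in> I" "j \<noteq> k" "\<And>i. i \<in> I \<Longrightarrow> integrable M (f i)"
    and "\<And>i. i \<in> I \<Longrightarrow> AE \<omega> in M. 0 \<le> f i \<omega>"
    and "0 < (\<integral>\<omega>. min (f j \<omega>) (f k \<omega>) \<partial>M)"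
  shows "(\<integral>\<omega>. Max ((\<lambda>i. f i \<omega>) ` I) \<partial>M) < (\<Sum>i\<in>I. \<integral>\<omega>. f i \<omega> \<partial>M)"
proof -
  have int_Max: "integrable M (\<lambda>\<omega>. Max ((\<lambda>i. f i \<omega>) ` I))"
    using assms(1-3,5) by (intro integrable_Max) auto
  have int_min: "integrable M (\<lambda>\<omega>. min (f j \<omega>) (f k \<omega>))"
    using assms(2,3,5) by (intro integrable_min) auto
  have "AE \<omega> in M. \<forall>i\<in>I. 0 \<le> f i \<omega>"
    by (rule AE_finite_allI[OF assms(1)]) (rule assms(6))
  then have "AE \<omega> in M. Max ((\<lambda>i. f i \<omega>) ` I) + min (f j \<omega>) (f k \<omega>) \<le> (\<Sum>i\<in>I. f i \<omega>)"
    by eventually_elim (use assms(1-4) in \<open>auto intro!: Max_add_min_le_sum_nonneg\<close>)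
  then have "(\<integral>\<omega>. Max ((\<lambda>i. f i \<omega>) ` I) + min (f j \<omega>) (f k \<omega>) \<partial>M) \<le> (\<integral>\<omega>. (\<Sum>i\<in>I. f i \<omega>) \<partial>M)"
    using int_Max int_min assms(1,5) by (intro integral_mono_AE) auto
  moreover have "(\<integral>\<omega>. Max ((\<lambda>i. f i \<omega>) ` I) + min (f j \<omega>) (f k \<omega>) \<partial>M)
      = (\<integral>\<omega>. Max ((\<lambda>i. f i \<omega>) ` I) \<partial>M) + (\<integral>\<omega>. min (f j \<omega>) (f k \<omega>) \<partial>M)"
    using int_Max int_min by (rule Bochner_Integration.integral_add)
  moreover have "(\<integral>\<omega>. (\<Sum>i\<in>I. f i \<omega>) \<partial>M) = (\<Sum>i\<in>I. \<integral>\<omega>. f i \<omega> \<partial>M)"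
    using assms(5) by (rule Bochner_Integration.integral_sum)
  ultimately show ?thesis
    using assms(7) by linarith
qed

lemma integral_min_const_pos:
  fixes g :: "'a \<Rightarrow> real"
  assumes "0 < c" "integrable M g" "AE \<omega> in M. 0 \<le> g \<omega>" "0 < (\<integral>\<omega>. g \<omega> \<partial>M)"
  shows "0 < (\<integral>\<omega>. min c (g \<omega>) \<partial>M)"
proof -
  have int: "integrable M (\<lambda>\<omega>. min c (g \<omega>))"
  proof (rule Bochner_Integration.integrable_bound[OF assms(2)])
    show "AE \<omega> in M. norm (min c (g \<omega>)) \<le> norm (g \<omega>)"
      using assms(3) by eventually_elim (use assms(1) in auto)
  qed (use assms(2) in auto)
  have nonneg: "AE \<omega> in M. 0 \<le> min c (g \<omega>)"
    using assms(3) by eventually_elim (use assms(1) in auto)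
  show ?thesis
  proof (rule ccontr)
    assume "\<not> ?thesis"
    then have "(\<integral>\<omega>. min c (g \<omega>) \<partial>M) = 0"
      using integral_nonneg_AE[OF nonneg] by linarith
    then have "AE \<omega> in M. min c (g \<omega>) = 0"
      using integral_nonneg_eq_0_iff_AE[OF int nonneg] by simp
    then have "AE \<omega> in M. g \<omega> = 0"
      by eventually_elim (use assms(1) in \<open>auto simp: min_def split: if_splits\<close>)
    then have "(\<integral>\<omega>. g \<omega> \<partial>M) = 0"
      by (rule integral_eq_zero_AE)
    then show False
      using assms(4) by simp
  qed
qed

definition F_term :: "(nat \<Rightarrow> 'a \<Rightarrow> real) \<Rightarrow> (nat \<Rightarrow> real) \<Rightarrow> nat \<Rightarrow> 'a \<Rightarrow> real" where
  "F_term X x i \<omega> = (if i = 0 then \<bar>x 0\<bar> else \<bar>x i\<bar> * X i \<omega>)"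

lemma F_norm_eq_integral_Max_F_term:
  "F_norm M X d x = (\<integral>\<omega>. Max ((\<lambda>i. F_term X x i \<omega>) ` {0..d}) \<partial>M)"
  unfolding F_norm_def F_term_def
  by (intro arg_cong[where f = "integral\<^sup>L M"] ext arg_cong[where f = Max]) (auto simp: image_iff)

lemma integrable_F_term:
  assumes "\<And>i. i \<in> {1..d} \<Longrightarrow> integrable M (X i)" "finite_measure M" "i \<in> {0..d}"
  shows "integrable M (F_term X x i)"
  using assms by (cases "i = 0") (auto simp: F_term_def[abs_def] intro: finite_measure.integrable_const)

lemma AE_F_term_nonneg:
  assumes "\<And>i. i \<in> {1..d} \<Longrightarrow> AE \<omega> in M. 0 \<le> X i \<omega>" "i \<in> {0..d}"
  shows "AE \<omega> in M. 0 \<le> F_term X x i \<omega>"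
proof (cases "i = 0")
  case False
  with assms have "AE \<omega> in M. 0 \<le> X i \<omega>"
    by auto
  then show ?thesis
    by eventually_elim (simp add: F_term_def)
qed (simp add: F_term_def)

lemma (in prob_space) integral_F_term:
  "(\<integral>\<omega>. F_term X x i \<omega> \<partial>M) = (if i = 0 then \<bar>x 0\<bar> else \<bar>x i\<bar> * (\<integral>\<omega>. X i \<omega> \<partial>M))"
  by (simp add: F_term_def prob_space)

theorem proposition2p17:
  fixes M :: "'a measure" and X :: "nat \<Rightarrow> 'a \<Rightarrow> real" and d :: nat and x :: "nat \<Rightarrow> real"
  assumes "prob_space M"
    and "\<And>i. i \<in> {1..d} \<Longrightarrow> X i \<in> borel_measurable M"
    and "\<And>i. i \<in> {1..d} \<Longrightarrow> AE \<omega> in M. X i \<omega> \<ge> 0"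
    and "\<And>i. i \<in> {1..d} \<Longrightarrow> integrable M (X i)"
    and "\<And>i. i \<in> {1..d} \<Longrightarrow> (\<integral>\<omega>. X i \<omega> \<partial>M) > 0"
  shows "Max ({\<bar>x 0\<bar>} \<union> {\<bar>x i\<bar> * (\<integral>\<omega>. X i \<omega> \<partial>M) | i. i \<in> {1..d}}) \<le> F_norm M X d x
       \<and> F_norm M X d x \<le> \<bar>x 0\<bar> + (\<Sum>i=1..d. \<bar>x i\<bar> * (\<integral>\<omega>. X i \<omega> \<partial>M))
       \<and> ((x 0 \<noteq> 0 \<and> (\<exists>i\<in>{1..d}. x i \<noteq> 0)) \<longrightarrow>
            F_norm M X d x < \<bar>x 0\<bar> + (\<Sum>i=1..d. \<bar>x i\<bar> * (\<integral>\<omega>. X i \<omega> \<partial>M)))"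
proof -
  interpret prob_space M by fact
  let ?h = "F_term X x"
  have h_integrable: "integrable M (?h i)" if "i \<in> {0..d}" for i
    using assms(4) that by (intro integrable_F_term) (auto intro: finite_measure_axioms)
  have h_nonneg: "AE \<omega> in M. 0 \<le> ?h i \<omega>" if "i \<in> {0..d}" for i
    using assms(3) that by (intro AE_F_term_nonneg) auto
  have lower_set: "{\<bar>x 0\<bar>} \<union> {\<bar>x i\<bar> * (\<integral>\<omega>. X i \<omega> \<partial>M) | i. i \<in> {1..d}}
      = (\<lambda>i. \<integral>\<omega>. ?h i \<omega> \<partial>M) ` {0..d}"
    by (auto simp: integral_F_term image_iff)
  have upper_sum: "(\<Sum>i=0..d. \<integral>\<omega>. ?h i \<omega> \<partial>M) = \<bar>x 0\<bar> + (\<Sum>i=1..d. \<bar>x i\<bar> * (\<integral>\<omega>. X i \<omega> \<partial>M))"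
    by (simp add: sum.atLeast_Suc_atMost integral_F_term)
  have "Max ((\<lambda>i. \<integral>\<omega>. ?h i \<omega> \<partial>M) ` {0..d}) \<le> F_norm M X d x"
    unfolding F_norm_eq_integral_Max_F_term using h_integrable
    by (subst Max_le_iff) (auto intro: integral_le_integral_Max)
  moreover have "F_norm M X d x \<le> (\<Sum>i=0..d. \<integral>\<omega>. ?h i \<omega> \<partial>M)"
    unfolding F_norm_eq_integral_Max_F_term using h_integrable h_nonneg
    by (intro integral_Max_le_sum_integral) auto
  moreover have "F_norm M X d x < (\<Sum>i=0..d. \<integral>\<omega>. ?h i \<omega> \<partial>M)"
    if "x 0 \<noteq> 0" "j \<in> {1..d}" "x j \<noteq> 0" for j
  proof -
    have "0 < (\<integral>\<omega>. min \<bar>x 0\<bar> (?h j \<omega>) \<partial>M)"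
      using that assms(5)[of j] h_integrable h_nonneg[of j]
      by (intro integral_min_const_pos) (auto simp: integral_F_term)
    then have "0 < (\<integral>\<omega>. min (?h 0 \<omega>) (?h j \<omega>) \<partial>M)"
      by (simp add: F_term_def)
    then show ?thesis
      unfolding F_norm_eq_integral_Max_F_term using that h_integrable h_nonneg
      by (intro integral_Max_less_sum_integral[where j = 0 and k = j]) auto
  qed
  ultimately show ?thesis
    unfolding lower_set upper_sum by blast
qed

end
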